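(* For every integer $m \geq 1$, the complete bipartite graph $K_{m,m+1}$ is stable.
   Context: For a simple graph $G$, the independence polynomial is $i(G,x)=\sum_{k=0}^{\alpha(G)} i_k(G)x^k$, where $i_k(G)$ is the number of independent sets of size $k$ in $G$ (with $i_0(G)=1$). A graph $G$ is called stable if every root $z$ of $i(G,x)$ satisfies $\mathrm{Re}(z)\leq 0$. $K_{a,b}$ denotes the complete bipartite graph with parts of sizes $a$ and $b$; its independence polynomial is $(1+x)^a+(1+x)^b-1$. *)

theory Defs
  imports "HOL-Computational_Algebra.Polynomial" Complex_Main
begin

definition simple_graph :: "'v set \<Rightarrow> ('v \<Rightarrow> 'v \<Rightarrow> bool) \<Rightarrow> bool" where
  "simple_graph V E \<longleftrightarrow> finite V \<and> (\<forall>x y. E x y \<longrightarrow> x \<in> V \<and> y \<in> V)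
     \<and> (\<forall>x y. E x y \<longrightarrow> E y x) \<and> (\<forall>x. \<not> E x x)"

definition independent_set :: "'v set \<Rightarrow> ('v \<Rightarrow> 'v \<Rightarrow> bool) \<Rightarrow> 'v set \<Rightarrow> bool" where
  "independent_set V E S \<longleftrightarrow> S \<subseteq> V \<and> (\<forall>x\<in>S. \<forall>y\<in>S. \<not> E x y)"

definition indep_count :: "'v set \<Rightarrow> ('v \<Rightarrow> 'v \<Rightarrow> bool) \<Rightarrow> nat \<Rightarrow> nat" where
  "indep_count V E k = card {S. independent_set V E S \<and> card S = k}"

text \<open>Independence polynomial i(G,x) = sum_k i_k(G) x^k (with complex coefficients);
 independent sets have size at most card V, so summing to card V covers up to alpha(G).\<close>
definition indep_poly :: "'v set \<Rightarrow> ('v \<Rightarrow> 'v \<Rightarrow> bool) \<Rightarrow> complex poly" where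
  "indep_poly V E = (\<Sum>k\<le>card V. monom (of_nat (indep_count V E k)) k)"

definition stable_graph :: "'v set \<Rightarrow> ('v \<Rightarrow> 'v \<Rightarrow> bool) \<Rightarrow> bool" where
  "stable_graph V E \<longleftrightarrow> (\<forall>z. poly (indep_poly V E) z = 0 \<longrightarrow> Re z \<le> 0)"

definition Kab_V :: "nat \<Rightarrow> nat \<Rightarrow> (nat + nat) set" where
  "Kab_V a b = {0..<a} <+> {0..<b}"

definition Kab_E :: "nat \<Rightarrow> nat \<Rightarrow> (nat + nat) \<Rightarrow> (nat + nat) \<Rightarrow> bool" where
  "Kab_E a b u v \<longleftrightarrow> u \<in> Kab_V a b \<and> v \<in> Kab_V a b \<and>
     ((\<exists>i j. u = Inl i \<and> v = Inr j) \<or> (\<exists>i j. u = Inr j \<and> v = Inl i))"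

end

theory Submission
  imports Defs
begin

text \<open>An independent set of \<open>K\<^sub>a\<^sub>,\<^sub>b\<close> lies inside one side, so \<open>i(K\<^sub>a\<^sub>,\<^sub>b, z) = (1+z)\<^sup>a + (1+z)\<^sup>b - 1\<close>.
  For \<open>b = a + 1\<close> and \<open>w = 1 + z\<close> a root satisfies \<open>w\<^sup>a (1 + w) = 1\<close>, which is impossible when
  \<open>Re z > 0\<close>, since then \<open>|w| > 1\<close> and \<open>|1 + w| > 2\<close>. This also covers \<open>a = 0\<close>.\<close>

lemma sum_power_card_Pow:
  fixes z :: "'a :: comm_semiring_1"
  assumes "finite A"
  shows "(\<Sum>S\<in>Pow A. z ^ card S) = (z + 1) ^ card A"
  using prod_add[OF assms, of "\<lambda>_. z" "\<lambda>_. 1"] by simp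

lemma poly_indep_poly:
  assumes "finite V"
  shows "poly (indep_poly V E) z = (\<Sum>S | independent_set V E S. z ^ card S)"
proof -
  let ?I = "{S. independent_set V E S}"
  have "?I \<subseteq> Pow V"
    by (auto simp: independent_set_def)
  then have "finite ?I" and "card ` ?I \<subseteq> {..card V}"
    using assms by (auto intro: finite_subset card_mono)
  have "poly (indep_poly V E) z = (\<Sum>k\<le>card V. of_nat (indep_count V E k) * z ^ k)"
    by (simp add: indep_poly_def poly_sum poly_monom)
  also have "\<dots> = (\<Sum>k\<le>card V. \<Sum>S | S \<in> ?I \<and> card S = k. z ^ card S)"
    by (simp add: indep_count_def)
  also have "\<dots> = (\<Sum>S\<in>?I. z ^ card S)"
    using sum.group[OF \<open>finite ?I\<close> _ \<open>card ` ?I \<subseteq> {..card V}\<close>, of "\<lambda>S. z ^ card S"]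
    by simp
  finally show ?thesis .
qed

lemma independent_set_Kab_iff:
  "independent_set (Kab_V a b) (Kab_E a b) S \<longleftrightarrow> S \<subseteq> Inl ` {0..<a} \<or> S \<subseteq> Inr ` {0..<b}"
proof
  assume indep: "independent_set (Kab_V a b) (Kab_E a b) S"
  show "S \<subseteq> Inl ` {0..<a} \<or> S \<subseteq> Inr ` {0..<b}"
  proof (rule ccontr)
    assume "\<not> ?thesis"
    then obtain x y where "x \<in> S" "y \<in> S" "x \<notin> Inl ` {0..<a}" "y \<notin> Inr ` {0..<b}"
      by auto
    with indep have "Kab_E a b x y"
      by (auto simp: independent_set_def Kab_V_def Kab_E_def)
    with indep \<open>x \<in> S\<close> \<open>y \<in> S\<close> show False
      by (auto simp: independent_set_def)
  qed
qed (auto simp: independent_set_def Kab_V_def Kab_E_def)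

lemma poly_indep_poly_Kab:
  "poly (indep_poly (Kab_V a b) (Kab_E a b)) z = (1 + z) ^ a + (1 + z) ^ b - 1"
proof -
  let ?A = "Pow (Inl ` {0..<a}) :: (nat + nat) set set"
  let ?B = "Pow (Inr ` {0..<b}) :: (nat + nat) set set"
  have "finite (Kab_V a b)"
    by (simp add: Kab_V_def)
  then have "poly (indep_poly (Kab_V a b) (Kab_E a b)) z = (\<Sum>S\<in>?A \<union> ?B. z ^ card S)"
    by (simp add: poly_indep_poly independent_set_Kab_iff Collect_disj_eq Pow_def)
  also have "\<dots> = (\<Sum>S\<in>?A. z ^ card S) + (\<Sum>S\<in>?B. z ^ card S) - (\<Sum>S\<in>?A \<inter> ?B. z ^ card S)"
    by (simp add: sum_Un)
  also have "?A \<inter> ?B = {{}}"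
    by auto
  finally show ?thesis
    by (simp add: sum_power_card_Pow card_image add.commute)
qed

lemma power_add_power_Suc_neq_1:
  fixes w :: complex
  assumes "Re w > 1"
  shows "w ^ m + w ^ Suc m \<noteq> 1"
proof
  assume "w ^ m + w ^ Suc m = 1"
  then have "w ^ m * (w + 1) = 1"
    by (simp add: algebra_simps)
  then have "norm w ^ m * norm (w + 1) = 1"
    by (metis norm_mult norm_one norm_power)
  moreover have "1 * 2 < norm w ^ m * norm (w + 1)"
  proof (rule mult_le_less_imp_less)
    show "1 \<le> norm w ^ m"
      using assms complex_Re_le_cmod[of w] by simp
    show "2 < norm (w + 1)"
      using assms complex_Re_le_cmod[of "w + 1"] by simp
  qed simp_all
  ultimately show False
    by simp
qed

theorem proposition2p1:
  fixes m :: nat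
  assumes "m \<ge> 1"
  shows "stable_graph (Kab_V m (m + 1)) (Kab_E m (m + 1))"
  unfolding stable_graph_def poly_indep_poly_Kab
proof (intro allI impI)
  fix z :: complex
  assume "(1 + z) ^ m + (1 + z) ^ (m + 1) - 1 = 0"
  then show "Re z \<le> 0"
    using power_add_power_Suc_neq_1[of "1 + z" m] by fastforce
qed

end
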